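(* Let $G$ be a graph, $t\in\mathbb N$, and let $I_t=I_t^{(\mathcal P)}(G)$ for $\mathcal P\in\{push,pull,pp\}$. Then, conditional on $I_t$, there exist $m\in\mathbb N$, independent random variables $X_1,\dots,X_m$ and a self-bounding function $f=f^{(\mathcal P)}$ such that $|I_{t+1}|=f(X_1,\dots,X_m)$.
   Context: Rumour spreading protocols on a graph $G$ in synchronous rounds. push: every informed vertex chooses a neighbour independently and uniformly at random (iuar) and informs it. pull: every uninformed vertex chooses a neighbour iuar and becomes informed if that neighbour is informed. push\&pull (pp): every vertex chooses a neighbour iuar and if one of the two is informed both become informed. $I_t^{(\mathcal P)}(G)$ is the set of vertices informed at the beginning of round $t$. A non-negative function $f:X^m\to\mathbb R$ is self-bounding if there exist functions $f_i:X^{m-1}\to\mathbb R$ such that for all $x_1,\dots,x_m\in X$ and all $i$, $0\le f(x_1,\dots,x_m)-f_i(x_1,\dots,x_{i-1},x_{i+1},\dots,x_m)\le1$, and $\sum_{i=1}^m\big(f(x_1,\dots,x_m)-f_i(x_1,\dots,x_{i-1},x_{i+1},\dots,x_m)\big)\le f(x_1,\dots,x_m)$. *)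

theory Defs
  imports "HOL-Probability.Probability"
begin

definition graph :: "'a set \<Rightarrow> ('a \<Rightarrow> 'a \<Rightarrow> bool) \<Rightarrow> bool" where
  "graph V E \<longleftrightarrow> finite V \<and> (\<forall>u v. E u v \<longrightarrow> u \<in> V \<and> v \<in> V)
     \<and> (\<forall>u v. E u v \<longrightarrow> E v u) \<and> (\<forall>v. \<not> E v v)"

definition nbrs :: "'a set \<Rightarrow> ('a \<Rightarrow> 'a \<Rightarrow> bool) \<Rightarrow> 'a \<Rightarrow> 'a set" where
  "nbrs V E v = {u \<in> V. E v u}"

datatype protocol = Push | Pull | PushPull

definition round_choices :: "'a set \<Rightarrow> ('a \<Rightarrow> 'a \<Rightarrow> bool) \<Rightarrow> ('a \<Rightarrow> 'a) pmf" where
  "round_choices V E = Pi_pmf V undefined (\<lambda>v. pmf_of_set (nbrs V E v))"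

fun next_informed :: "protocol \<Rightarrow> 'a set \<Rightarrow> 'a set \<Rightarrow> ('a \<Rightarrow> 'a) \<Rightarrow> 'a set" where
  "next_informed Push V I c = I \<union> c ` I"
| "next_informed Pull V I c = I \<union> {u \<in> V. c u \<in> I}"
| "next_informed PushPull V I c = I \<union> c ` I \<union> {u \<in> V. c u \<in> I}"

text \<open>Self-bounding functions f : X^m \<rightarrow> \<real>; points of X^m are lists of length m over X,
and the i-th argument is removed by deleting the i-th list entry.\<close>

definition remove_nth :: "nat \<Rightarrow> 'x list \<Rightarrow> 'x list" where
  "remove_nth i xs = take i xs @ drop (Suc i) xs"

definition self_bounding :: "'x set \<Rightarrow> nat \<Rightarrow> ('x list \<Rightarrow> real) \<Rightarrow> bool" where
  "self_bounding X m f \<longleftrightarrow>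
     (\<exists>g :: nat \<Rightarrow> 'x list \<Rightarrow> real.
        \<forall>xs. length xs = m \<and> set xs \<subseteq> X \<longrightarrow>
          f xs \<ge> 0 \<and>
          (\<forall>i<m. 0 \<le> f xs - g i (remove_nth i xs) \<and> f xs - g i (remove_nth i xs) \<le> 1) \<and>
          (\<Sum>i<m. f xs - g i (remove_nth i xs)) \<le> f xs)"

end

theory Submission
  imports Defs
begin

text \<open>Each vertex v contributes, through its own choice x alone, at most one vertex to the
  informed set of the next round: its target x if v pushes, or v itself if it pulls from
  an informed x. Hence the size of the next informed set is the size of a union of a fixed
  set I with sets of size at most one, each depending on a single independent choice, and
  any such function is self-bounding: dropping one choice loses only the elements private
  to its set, and the private parts of different choices are disjoint.\<close>

lemma remove_nth_nth:
  assumes "length xs = m" "i < m" "j < m" "j \<noteq> i"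
  shows "remove_nth i xs ! (if j < i then j else j - 1) = xs ! j"
  using assms by (auto simp: remove_nth_def nth_append min_def)

lemma sum_card_private_le_card_Union:
  fixes B :: "'b set" and C :: "'i \<Rightarrow> 'b set"
  assumes "finite K" "finite B" "\<And>j. j \<in> K \<Longrightarrow> finite (C j)"
  shows "(\<Sum>i\<in>K. card ((B \<union> (\<Union>j\<in>K. C j)) - (B \<union> (\<Union>j\<in>K - {i}. C j))))
           \<le> card (B \<union> (\<Union>j\<in>K. C j))"
proof -
  define N where "N = B \<union> (\<Union>j\<in>K. C j)"
  define D where "D i = N - (B \<union> (\<Union>j\<in>K - {i}. C j))" for i
  have "finite N" using assms by (simp add: N_def)
  have "D i \<subseteq> N" for i by (auto simp: D_def)
  have "D i \<subseteq> C i" if "i \<in> K" for i using that by (auto simp: D_def N_def)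
  then have disjoint: "D i \<inter> D k = {}" if "i \<in> K" "k \<in> K" "i \<noteq> k" for i k
    using that by (auto simp: D_def)
  have "(\<Sum>i\<in>K. card (D i)) = card (\<Union>i\<in>K. D i)"
    using \<open>finite N\<close> \<open>\<And>i. D i \<subseteq> N\<close> disjoint assms(1)
    by (intro card_UN_disjoint[symmetric]) (auto intro: finite_subset)
  also have "\<dots> \<le> card N"
    using \<open>finite N\<close> \<open>\<And>i. D i \<subseteq> N\<close> by (intro card_mono) auto
  finally show ?thesis by (simp add: D_def N_def)
qed

lemma self_bounding_card_Union:
  fixes B :: "'b set" and C :: "nat \<Rightarrow> 'x \<Rightarrow> 'b set"
  assumes "finite B" and "\<And>j x. finite (C j x)" and "\<And>j x. card (C j x) \<le> 1"
  shows "self_bounding S m (\<lambda>xs. real (card (B \<union> (\<Union>j<m. C j (xs ! j)))))"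
  unfolding self_bounding_def
proof (intro exI allI impI)
  fix xs :: "'x list"
  assume "length xs = m \<and> set xs \<subseteq> S"
  then have len: "length xs = m" by simp
  define N where "N = B \<union> (\<Union>j<m. C j (xs ! j))"
  define A where "A i = B \<union> (\<Union>j\<in>{..<m} - {i}. C j (xs ! j))" for i
  let ?g = "\<lambda>i ys. real (card (B \<union> (\<Union>j\<in>{..<m} - {i}. C j (ys ! (if j < i then j else j - 1)))))"
  have "finite N" using assms by (simp add: N_def)
  have "A i \<subseteq> N" for i by (auto simp: A_def N_def)
  have loss: "real (card N) - ?g i (remove_nth i xs) = real (card (N - A i))" if "i < m" for i
  proof -
    have "(\<Union>j\<in>{..<m} - {i}. C j (remove_nth i xs ! (if j < i then j else j - 1)))
          = (\<Union>j\<in>{..<m} - {i}. C j (xs ! j))"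
      using remove_nth_nth[OF len that] by (intro SUP_cong) auto
    then have "?g i (remove_nth i xs) = real (card (A i))" by (simp add: A_def)
    moreover have "card (N - A i) = card N - card (A i)" "card (A i) \<le> card N"
      using \<open>finite N\<close> \<open>A i \<subseteq> N\<close> by (auto intro: card_Diff_subset finite_subset card_mono)
    ultimately show ?thesis by simp
  qed
  have "card (N - A i) \<le> 1" if "i < m" for i
  proof -
    have "N - A i \<subseteq> C i (xs ! i)" using that by (auto simp: N_def A_def)
    then show ?thesis using assms(2,3) card_mono order_trans by metis
  qed
  moreover have "(\<Sum>i<m. card (N - A i)) \<le> card N"
    unfolding N_def A_def using assms(1,2) by (intro sum_card_private_le_card_Union) auto
  ultimately show "0 \<le> real (card N) \<and>
      (\<forall>i<m. 0 \<le> real (card N) - ?g i (remove_nth i xs) \<and> real (card N) - ?g i (remove_nth i xs) \<le> 1) \<and>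
      (\<Sum>i<m. real (card N) - ?g i (remove_nth i xs)) \<le> real (card N)"
    using loss by (simp add: of_nat_sum[symmetric] del: of_nat_sum)
qed

lemma (in prob_space) indep_sets_reindex:
  assumes "inj_on h I" and "indep_sets F (h ` I)"
  shows "indep_sets (\<lambda>i. F (h i)) I"
  unfolding indep_sets_def
proof (intro conjI ballI allI impI)
  fix i assume "i \<in> I"
  then show "F (h i) \<subseteq> events" using assms(2) by (auto simp: indep_sets_def)
next
  fix J A assume J: "J \<subseteq> I" "J \<noteq> {}" "finite J" and A: "A \<in> Pi J (\<lambda>i. F (h i))"
  have "inj_on h J" using assms(1) J(1) inj_on_subset by blast
  define A' where "A' k = A (the_inv_into J h k)" for k
  have A'h: "A' (h j) = A j" if "j \<in> J" for j
    unfolding A'_def using the_inv_into_f_f[OF \<open>inj_on h J\<close> that] by simp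
  have "A' \<in> Pi (h ` J) F" using A A'h by auto
  then have "prob (\<Inter>k\<in>h ` J. A' k) = (\<Prod>k\<in>h ` J. prob (A' k))"
    using assms(2) J unfolding indep_sets_def by (meson finite_imageI image_is_empty image_mono)
  then show "prob (\<Inter>j\<in>J. A j) = (\<Prod>j\<in>J. prob (A j))"
    using prod.reindex[OF \<open>inj_on h J\<close>, of "\<lambda>k. prob (A' k)"] A'h by simp
qed

lemma indep_vars_Pi_pmf_list:
  assumes "distinct vs"
  shows "prob_space.indep_vars (measure_pmf (Pi_pmf (set vs) d p)) (\<lambda>_. count_space UNIV)
           (\<lambda>i c. c (vs ! i)) {..<length vs}"
proof -
  have ps: "prob_space (measure_pmf (Pi_pmf (set vs) d p))"
    by (rule measure_pmf.prob_space_axioms)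
  have "inj_on ((!) vs) {..<length vs}"
    using assms by (simp add: inj_on_def nth_eq_iff_index_eq)
  moreover have "(!) vs ` {..<length vs} = set vs"
    by (auto simp: in_set_conv_nth)
  ultimately show ?thesis
    using indep_vars_Pi_pmf[of "set vs" d p] prob_space.indep_sets_reindex[OF ps]
    unfolding prob_space.indep_vars_def2[OF ps] by fastforce
qed

definition contribution :: "protocol \<Rightarrow> 'a set \<Rightarrow> 'a \<Rightarrow> 'a \<Rightarrow> 'a set" where
  "contribution P I v x = (case P of
      Push \<Rightarrow> (if v \<in> I then {x} else {})
    | Pull \<Rightarrow> (if v \<notin> I \<and> x \<in> I then {v} else {})
    | PushPull \<Rightarrow> (if v \<in> I then {x} else {}) \<union> (if v \<notin> I \<and> x \<in> I then {v} else {}))"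

lemma finite_contribution: "finite (contribution P I v x)"
  by (cases P) (auto simp: contribution_def)

lemma card_contribution_le: "card (contribution P I v x) \<le> 1"
  by (cases P) (auto simp: contribution_def)

lemma next_informed_eq_Union_contribution:
  assumes "I \<subseteq> V"
  shows "next_informed P V I c = I \<union> (\<Union>v\<in>V. contribution P I v (c v))"
  using assms by (cases P) (auto simp: contribution_def split: if_splits)

theorem lemma2p4:
  fixes V :: "'a set" and E :: "'a \<Rightarrow> 'a \<Rightarrow> bool" and P :: protocol and I :: "'a set"
  assumes "graph V E"
    and "\<forall>v\<in>V. nbrs V E v \<noteq> {}"
    and "I \<subseteq> V"
  shows "\<exists>(m::nat) (S::'a set) (X :: nat \<Rightarrow> ('a \<Rightarrow> 'a) \<Rightarrow> 'a) (f :: 'a list \<Rightarrow> real).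
           prob_space.indep_vars (measure_pmf (round_choices V E)) (\<lambda>_. count_space S) X {..<m}
         \<and> self_bounding S m f
         \<and> (\<forall>c \<in> set_pmf (round_choices V E).
              real (card (next_informed P V I c)) = f (map (\<lambda>i. X i c) [0..<m]))"
proof -
  obtain vs where vs: "set vs = V" "distinct vs"
    using assms(1) finite_distinct_list unfolding graph_def by blast
  define m where "m = length vs"
  define f where "f xs = real (card (I \<union> (\<Union>j<m. contribution P I (vs ! j) (xs ! j))))" for xs
  have "finite I" using assms(1,3) finite_subset unfolding graph_def by blast
  have "prob_space.indep_vars (measure_pmf (round_choices V E)) (\<lambda>_. count_space UNIV)
          (\<lambda>i c. c (vs ! i)) {..<m}"
    unfolding round_choices_def m_def vs(1)[symmetric] using vs(2) by (rule indep_vars_Pi_pmf_list)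
  moreover have "self_bounding UNIV m f"
    unfolding f_def using \<open>finite I\<close> finite_contribution card_contribution_le
    by (rule self_bounding_card_Union)
  moreover have "real (card (next_informed P V I c)) = f (map (\<lambda>i. c (vs ! i)) [0..<m])" for c
  proof -
    have "(\<Union>j<m. contribution P I (vs ! j) (map (\<lambda>i. c (vs ! i)) [0..<m] ! j))
          = (\<Union>v\<in>V. contribution P I v (c v))"
      unfolding vs(1)[symmetric] m_def by (auto simp: in_set_conv_nth) (metis nth_mem)
    then show ?thesis
      unfolding f_def using next_informed_eq_Union_contribution[OF assms(3)] by simp
  qed
  ultimately show ?thesis by blast
qed

end
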